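(* Let $X_1,X_2,\dots$ be i.i.d. exponential random variables with mean $1$ and $\lambda_1,\lambda_2,\dots$ positive reals. Then for any $t\ge0$ and integers $k>m\ge0$, $$\mathbb{P}\Big(\sum_{i=1}^kX_i/\lambda_i\le t,\ \sum_{i=1}^mX_i/\lambda_i+\sum_{i=k+1}^{2k-m}X_i/\lambda_i\le t\Big)\le\frac{(et)^{2k-m}}{(k-m)^{2k-2m}m^m}\prod_{i=1}^{2k-m}\lambda_i.$$
   Context: The convention $0^0=1$ is used when $m=0$. *)

theory Defs
  imports "HOL-Probability.Probability"
begin

end

theory Submission
  imports Defs
begin

text \<open>A Chernoff bound. With \<open>n = 2k - m\<close>, adding the two constraints shows that the event
  forces \<open>\<Sum>i\<le>n. w i * X i \<le> 2t\<close>, where \<open>w i = 2 / \<lambda> i\<close> for \<open>i \<le> m\<close> and \<open>w i = 1 / \<lambda> i\<close>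
  otherwise. By independence, \<open>E exp (-\<theta> \<Sum>i. w i * X i) = \<Prod>i. 1 / (1 + \<theta> w i)\<close>, which is at most
  \<open>(\<Prod>i. \<lambda> i) / (2^m \<theta>^n)\<close>; hence the probability is at most \<open>e^(2\<theta>t) (\<Prod>i. \<lambda> i) / (2^m \<theta>^n)\<close>
  for every \<open>\<theta> > 0\<close>. Taking \<open>\<theta> = n / (2t)\<close> and using \<open>(2(k-m))^(2(k-m)) m^m \<le> n^n\<close> gives the
  claim; for \<open>t = 0\<close> let \<open>\<theta> \<rightarrow> \<infinity>\<close>.\<close>

lemma exponential_density_mult_exp:
  assumes "0 < l" "0 \<le> a"
  shows "exponential_density l x * exp (- a * x) = l / (l + a) * exponential_density (l + a) x"
  using assms by (simp add: exponential_density_def exp_add[symmetric] field_simps)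

lemma (in prob_space) Laplace_transform_exponential:
  assumes D: "distributed M lborel Y (exponential_density l)" and l: "0 < l" and a: "0 \<le> a"
  shows "has_bochner_integral M (\<lambda>\<omega>. exp (- a * Y \<omega>)) (l / (l + a))"
proof (rule has_bochner_integral_nn_integral)
  have [measurable]: "Y \<in> borel_measurable M" using distributed_measurable[OF D] by simp
  show "(\<lambda>\<omega>. exp (- a * Y \<omega>)) \<in> borel_measurable M" by measurable
  have "(\<integral>\<^sup>+\<omega>. ennreal (exp (- a * Y \<omega>)) \<partial>M)
      = (\<integral>\<^sup>+x. ennreal (exponential_density l x) * ennreal (exp (- a * x)) \<partial>lborel)"
    by (subst distributed_nn_integral[symmetric, OF D]) auto
  also have "\<dots> = (\<integral>\<^sup>+x. ennreal (l / (l + a)) * ennreal (exponential_density (l + a) x) \<partial>lborel)"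
    using l a exponential_density_nonneg[of l] exponential_density_mult_exp[OF l a]
    by (intro nn_integral_cong) (simp add: ennreal_mult'[symmetric] del: exponential_density_def)
  also have "\<dots> = ennreal (l / (l + a))"
    using nn_integral_erlang_ith_moment[of "l + a" 0 0] l a by (simp add: nn_integral_cmult)
  finally show "(\<integral>\<^sup>+\<omega>. ennreal (exp (- a * Y \<omega>)) \<partial>M) = ennreal (l / (l + a))" .
qed (use l a in auto)

lemma (in prob_space) Laplace_transform_indep_sum_exponential:
  assumes I: "finite I" and indep: "indep_vars (\<lambda>_. borel) X I"
    and D: "\<And>i. i \<in> I \<Longrightarrow> distributed M lborel (X i) (exponential_density (l i))"
    and l: "\<And>i. i \<in> I \<Longrightarrow> 0 < l i" and c: "\<And>i. i \<in> I \<Longrightarrow> 0 \<le> c i"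
  shows "has_bochner_integral M (\<lambda>\<omega>. exp (- (\<Sum>i\<in>I. c i * X i \<omega>))) (\<Prod>i\<in>I. l i / (l i + c i))"
proof -
  define Z where "Z i \<omega> = exp (- c i * X i \<omega>)" for i \<omega>
  have indep_Z: "indep_vars (\<lambda>_. borel) Z I"
    unfolding Z_def using indep by (rule indep_vars_compose2) auto
  have Z: "has_bochner_integral M (Z i) (l i / (l i + c i))" if "i \<in> I" for i
    unfolding Z_def using D l c that by (intro Laplace_transform_exponential)
  then have int_Z: "integrable M (Z i)" if "i \<in> I" for i
    using that integrable.intros by blast
  have "(\<lambda>\<omega>. exp (- (\<Sum>i\<in>I. c i * X i \<omega>))) = (\<lambda>\<omega>. \<Prod>i\<in>I. Z i \<omega>)"
    using I by (simp add: Z_def exp_sum sum_negf[symmetric])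
  moreover have "(\<integral>\<omega>. (\<Prod>i\<in>I. Z i \<omega>) \<partial>M) = (\<Prod>i\<in>I. l i / (l i + c i))"
    using indep_vars_lebesgue_integral[OF I indep_Z int_Z] Z has_bochner_integral_integral_eq
    by (metis (no_types, lifting) prod.cong)
  ultimately show ?thesis
    using indep_vars_integrable[OF I indep_Z int_Z] by (simp add: has_bochner_integral_iff)
qed

lemma (in prob_space) prob_indep_sum_exponential_le:
  assumes I: "finite I" and indep: "indep_vars (\<lambda>_. borel) X I"
    and D: "\<And>i. i \<in> I \<Longrightarrow> distributed M lborel (X i) (exponential_density (l i))"
    and l: "\<And>i. i \<in> I \<Longrightarrow> 0 < l i" and c: "\<And>i. i \<in> I \<Longrightarrow> 0 \<le> c i"
    and \<theta>: "0 < \<theta>"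
  shows "prob {\<omega> \<in> space M. (\<Sum>i\<in>I. c i * X i \<omega>) \<le> s}
    \<le> exp (\<theta> * s) * (\<Prod>i\<in>I. l i / (l i + \<theta> * c i))"
proof -
  let ?S = "\<lambda>\<omega>. \<Sum>i\<in>I. c i * X i \<omega>"
  have "has_bochner_integral M (\<lambda>\<omega>. exp (- (\<Sum>i\<in>I. (\<theta> * c i) * X i \<omega>)))
      (\<Prod>i\<in>I. l i / (l i + \<theta> * c i))"
    using I indep D l c \<theta> by (intro Laplace_transform_indep_sum_exponential) auto
  then have Laplace: "has_bochner_integral M (\<lambda>\<omega>. exp (- \<theta> * ?S \<omega>)) (\<Prod>i\<in>I. l i / (l i + \<theta> * c i))"
    by (simp add: sum_distrib_left mult.assoc sum_negf)
  then have "set_integrable M (space M) (\<lambda>\<omega>. exp (- \<theta> * ?S \<omega>))"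
    unfolding set_integrable_def by (intro integrable_mult_indicator integrable.intros) auto
  then have "prob {\<omega> \<in> space M. ?S \<omega> \<le> s} \<le> exp (\<theta> * s) * (\<integral>\<omega>\<in>space M. exp (- \<theta> * ?S \<omega>) \<partial>M)"
    using \<theta> by (intro Chernoff_ineq_le) auto
  also have "(\<integral>\<omega>\<in>space M. exp (- \<theta> * ?S \<omega>) \<partial>M) = (\<Prod>i\<in>I. l i / (l i + \<theta> * c i))"
    using Laplace by (simp add: set_integral_space integrable.intros has_bochner_integral_integral_eq)
  finally show ?thesis .
qed

lemma sum_two_overlapping_blocks:
  fixes f :: "nat \<Rightarrow> 'a::comm_semiring_1"
  assumes "m \<le> k" "k \<le> n"
  shows "(\<Sum>i=1..k. f i) + ((\<Sum>i=1..m. f i) + (\<Sum>i=k+1..n. f i))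
       = (\<Sum>i=1..n. (if i \<le> m then 2 else 1) * f i)"
proof -
  have split: "sum g {a+1..c} = sum g {a+1..b} + sum g {b+1..c}" if "a \<le> b" "b \<le> c"
    for g :: "nat \<Rightarrow> 'a" and a b c
    using sum.ub_add_nat[of "a+1" b g "c-b"] that by simp
  let ?w = "\<lambda>i. (if i \<le> m then 2 else 1) * f i"
  have "(\<Sum>i=1..n. ?w i) = (\<Sum>i=1..m. ?w i) + (\<Sum>i=m+1..k. ?w i) + (\<Sum>i=k+1..n. ?w i)"
    using split[of 0 m n ?w] split[of m k n ?w] assms by (simp add: add.assoc)
  also have "\<dots> = (\<Sum>i=1..m. f i) + (\<Sum>i=1..m. f i) + (\<Sum>i=m+1..k. f i) + (\<Sum>i=k+1..n. f i)"
    using assms by (simp add: mult_2 sum.distrib)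
  finally show ?thesis
    using split[of 0 m k f] assms by (simp add: algebra_simps)
qed

lemma prod_two_level_const:
  fixes a b :: "'a::comm_monoid_mult"
  assumes "m \<le> n"
  shows "(\<Prod>i=1..n. if i \<le> m then a else b) = a ^ m * b ^ (n - m)"
proof -
  have "{1..n} \<inter> {i. i \<le> m} = {1..m}" "{1..n} \<inter> - {i. i \<le> m} = {m+1..n}"
    using assms by auto
  then show ?thesis by (simp add: prod.If_cases)
qed

lemma (in prob_space) prob_two_overlapping_sums_le:
  fixes X :: "nat \<Rightarrow> 'a \<Rightarrow> real" and lam :: "nat \<Rightarrow> real"
  assumes indep: "indep_vars (\<lambda>_. borel) X {1..}"
    and D: "\<And>i. i \<ge> 1 \<Longrightarrow> distributed M lborel (X i) (exponential_density 1)"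
    and lam: "\<And>i. i \<ge> 1 \<Longrightarrow> 0 < lam i"
    and mk: "m \<le> k" and \<theta>: "0 < \<theta>"
  shows "prob {\<omega> \<in> space M. (\<Sum>i=1..k. X i \<omega> / lam i) \<le> t \<and>
            (\<Sum>i=1..m. X i \<omega> / lam i) + (\<Sum>i=k+1..2*k-m. X i \<omega> / lam i) \<le> t}
         \<le> exp (2 * \<theta> * t) * (\<Prod>i=1..2*k-m. lam i) / (2 ^ m * \<theta> ^ (2*k-m))"
    (is "prob ?E \<le> _")
proof -
  define n where "n = 2 * k - m"
  have kn: "k \<le> n" using mk by (simp add: n_def)
  define w where "w i = (if i \<le> m then 2 else 1) / lam i" for i
  have [measurable]: "X i \<in> borel_measurable M" if "i \<in> {1..n}" for i
    using D[of i] that distributed_measurable by (metis atLeastAtMost_iff measurable_lborel1)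
  have "?E \<subseteq> {\<omega> \<in> space M. (\<Sum>i\<in>{1..n}. w i * X i \<omega>) \<le> 2 * t}"
  proof safe
    fix \<omega> assume "(\<Sum>i=1..k. X i \<omega> / lam i) \<le> t"
      "(\<Sum>i=1..m. X i \<omega> / lam i) + (\<Sum>i=k+1..2*k-m. X i \<omega> / lam i) \<le> t"
    moreover have "(\<Sum>i\<in>{1..n}. w i * X i \<omega>) = (\<Sum>i=1..n. (if i \<le> m then 2 else 1) * (X i \<omega> / lam i))"
      by (simp add: w_def)
    ultimately show "(\<Sum>i\<in>{1..n}. w i * X i \<omega>) \<le> 2 * t"
      using sum_two_overlapping_blocks[of m k n "\<lambda>i. X i \<omega> / lam i"] mk kn by (simp add: n_def)
  qed
  then have "prob ?E \<le> prob {\<omega> \<in> space M. (\<Sum>i\<in>{1..n}. w i * X i \<omega>) \<le> 2 * t}"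
    by (intro finite_measure_mono) measurable
  also have "\<dots> \<le> exp (\<theta> * (2 * t)) * (\<Prod>i\<in>{1..n}. 1 / (1 + \<theta> * w i))"
    using indep_vars_subset[OF indep] D lam \<theta>
    by (intro prob_indep_sum_exponential_le) (auto simp: w_def intro!: less_imp_le[OF lam])
  also have "\<dots> \<le> exp (\<theta> * (2 * t)) * (\<Prod>i\<in>{1..n}. lam i / (if i \<le> m then 2 * \<theta> else \<theta>))"
  proof (intro mult_left_mono prod_mono conjI)
    fix i assume "i \<in> {1..n}"
    then have "0 < lam i" by (simp add: lam)
    then show "0 \<le> 1 / (1 + \<theta> * w i)"
      and "1 / (1 + \<theta> * w i) \<le> lam i / (if i \<le> m then 2 * \<theta> else \<theta>)"
      using \<theta> by (auto simp: w_def field_simps)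
  qed simp
  also have "(\<Prod>i\<in>{1..n}. lam i / (if i \<le> m then 2 * \<theta> else \<theta>)) = (\<Prod>i=1..n. lam i) / (2 ^ m * \<theta> ^ n)"
  proof -
    have "(\<Prod>i=1..n. if i \<le> m then 2 * \<theta> else \<theta>) = 2 ^ m * \<theta> ^ n"
      using prod_two_level_const[of m n "2 * \<theta>" \<theta>] mk kn
      by (simp add: power_mult_distrib mult.assoc flip: power_add)
    then show ?thesis by (simp add: prod_dividef)
  qed
  finally show ?thesis by (simp add: n_def mult_ac)
qed

lemma le_zero_of_le_divide_power:
  fixes P C :: real
  assumes bound: "\<And>\<theta>. 0 < \<theta> \<Longrightarrow> P \<le> C / \<theta> ^ n" and n: "0 < n"
  shows "P \<le> 0"
proof (rule tendsto_le[OF trivial_limit_at_top_linorder])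
  show "((\<lambda>\<theta>::real. C / \<theta> ^ n) \<longlongrightarrow> 0) at_top"
    using n by (intro tendsto_divide_0[OF tendsto_const] filterlim_at_top_imp_at_infinity
        filterlim_pow_at_top filterlim_ident) auto
  show "\<forall>\<^sub>F \<theta> in at_top. P \<le> C / \<theta> ^ n"
    using eventually_gt_at_top[of 0] by eventually_elim (rule bound)
qed simp

lemma power_mult_power_le_power_add:
  fixes a b :: real
  assumes "0 \<le> a" "0 \<le> b"
  shows "a ^ p * b ^ q \<le> (a + b) ^ (p + q)"
  using assms by (simp add: power_add mult_mono power_mono zero_le_power)

lemma exp_bound_minimized:
  fixes P L t :: real and m j :: nat
  assumes bound: "\<And>\<theta>. 0 < \<theta> \<Longrightarrow> P \<le> exp (2 * \<theta> * t) * L / (2 ^ m * \<theta> ^ (m + 2 * j))"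
    and L: "0 \<le> L" and t: "0 \<le> t" and j: "0 < j"
  shows "P \<le> (exp 1 * t) ^ (m + 2 * j) / (real j ^ (2 * j) * real m ^ m) * L"
proof (cases "t = 0")
  case True
  then have "P \<le> 0"
    using bound j by (intro le_zero_of_le_divide_power[of P "L / 2 ^ m" "m + 2 * j"]) auto
  then show ?thesis using True j by (simp add: zero_power)
next
  case False
  with t have t: "0 < t" by simp
  define n where "n = m + 2 * j"
  have n: "0 < real n" using j by (simp add: n_def)
  have "P \<le> exp (2 * (n / (2 * t)) * t) * L / (2 ^ m * (n / (2 * t)) ^ n)"
    using bound[of "n / (2 * t)"] n t by (simp add: n_def)
  also have "exp (2 * (n / (2 * t)) * t) = exp 1 ^ n"
    using t by (simp add: exp_of_nat_mult[symmetric])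
  also have "exp 1 ^ n * L / (2 ^ m * (n / (2 * t)) ^ n) = (exp 1 * t) ^ n * L * (2 ^ (2 * j) / real n ^ n)"
    using n t by (simp add: power_divide power_mult_distrib n_def power_add field_simps)
  also have "\<dots> \<le> (exp 1 * t) ^ n * L * (1 / (real j ^ (2 * j) * real m ^ m))"
  proof (intro mult_left_mono)
    have "(2 * real j) ^ (2 * j) * real m ^ m \<le> real n ^ n"
      using power_mult_power_le_power_add[of "2 * real j" "real m" "2 * j" m]
      by (simp add: n_def add.commute)
    moreover have "0 < real j ^ (2 * j) * real m ^ m"
      using j by (cases "m = 0") auto
    ultimately show "2 ^ (2 * j) / real n ^ n \<le> 1 / (real j ^ (2 * j) * real m ^ m)"
      using n by (simp add: field_simps power_mult_distrib)
  qed (use L t in auto)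
  finally show ?thesis by (simp add: n_def)
qed

theorem lemma2p2:
  fixes M :: "'a measure" and X :: "nat \<Rightarrow> 'a \<Rightarrow> real" and lam :: "nat \<Rightarrow> real"
    and t :: real and k m :: nat
  assumes "prob_space M"
    and "prob_space.indep_vars M (\<lambda>_. borel) X {1..}"
    and "\<And>i. i \<ge> 1 \<Longrightarrow> distributed M lborel (X i) (exponential_density 1)"
    and "\<And>i. i \<ge> 1 \<Longrightarrow> lam i > 0"
    and "t \<ge> 0"
    and "k > m"
  shows "measure M {\<omega> \<in> space M.
            (\<Sum>i=1..k. X i \<omega> / lam i) \<le> t \<and>
            (\<Sum>i=1..m. X i \<omega> / lam i) + (\<Sum>i=k+1..2*k-m. X i \<omega> / lam i) \<le> t}
         \<le> (exp 1 * t) ^ (2*k-m) / (real (k-m) ^ (2*k-2*m) * real m ^ m)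
             * (\<Prod>i=1..2*k-m. lam i)"
proof -
  interpret prob_space M by (rule assms(1))
  define j where "j = k - m"
  have j: "0 < j" and n: "2 * k - m = m + 2 * j" "2 * k - 2 * m = 2 * j"
    using assms(6) by (auto simp: j_def)
  have L: "0 \<le> (\<Prod>i=1..2*k-m. lam i)"
    using assms(4) by (intro prod_nonneg) (auto intro: less_imp_le)
  have "measure M {\<omega> \<in> space M.
            (\<Sum>i=1..k. X i \<omega> / lam i) \<le> t \<and>
            (\<Sum>i=1..m. X i \<omega> / lam i) + (\<Sum>i=k+1..2*k-m. X i \<omega> / lam i) \<le> t}
      \<le> exp (2 * \<theta> * t) * (\<Prod>i=1..2*k-m. lam i) / (2 ^ m * \<theta> ^ (m + 2 * j))" if "0 < \<theta>" for \<theta>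
    using prob_two_overlapping_sums_le[OF assms(2-4) less_imp_le[OF assms(6)] that] by (simp only: n)
  from exp_bound_minimized[OF this L assms(5) j] show ?thesis
    by (simp only: n j_def)
qed

end
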